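(* Fix constants $0<C_1\le C_2$, an integer $K\ge1$, and constants $C,\delta>0$. Let $G=(V,E)$ be a proper graph on $n$ vertices and $N=(G,c)$ an electrical network with $C_1\le c_{ij}\le C_2$ for all $(i,j)\in E$. Let $\Gamma=\{x_1,\dots,x_K\}\subset V$ be distinct boundary vertices with boundary potentials $V_{x_k}=p_{x_k}$, $0\le p_{x_k}\le 1$, $k=1,\dots,K$. Then the potential distribution satisfies \[ V_i=\frac{\sum_{k=1}^K p_{x_k}c_{x_k}}{\sum_{k=1}^K c_{x_k}}+O\big((\ln n)^{-1}\big)\qquad\text{for each } i\in V\setminus\Gamma, \] where the implied constant depends only on $C_1,C_2,K,C,\delta$.
   Context: An electrical network $N=(G,c)$ on a simple graph $G=(V,E)$ assigns a conductance $c_{ij}=c_{ji}>0$ to each edge $(i,j)\in E$; write $c_i=\sum_{j:(i,j)\in E}c_{ij}$. Given a boundary set $\Gamma\subset V$ with prescribed values on $\Gamma$, the potential distribution is the function $V:V\to\mathbb{R}$ taking the prescribed values on $\Gamma$ and satisfying $\sum_{j:(i,j)\in E}c_{ij}(V_i-V_j)=0$ (i.e. $V_i=\sum_{j:(i,j)\in E}\frac{c_{ij}}{c_i}V_j$) for every $i\in V\setminus\Gamma$. Let $G=(V,E)$ be a simple graph on $n$ vertices and let $0<C_1\le C_2$, $K\ge 1$, $C>0$, $\delta>0$ be constants. $G$ is called proper if: (P1) $G$ is connected. (P2) Calling a cycle short if its length is at most $\frac{\ln n}{10\ln\ln n}$, any two distinct short cycles are at distance at least $\frac{\ln n}{\ln\ln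 n}$. (P3) $G$ contains at least one cycle of length 3, one of length 5, and one of length 7. (P4) For every conductance assignment $c$ on $E$ with $C_1\le c_{ij}\le C_2$ for all $(i,j)\in E$, every $L\subset V$ with $|L|\le K$, and every nonempty $S\subset V\setminus L$ with $|S|\le n/2$, writing $G'=G[V\setminus L]=(V',E')$, $\bar S=V\setminus(L\cup S)$, $E_{G'}(S,\bar S)$ for the set of edges of $G'$ with one end in $S$ and the other in $\bar S$, and $c'_i=\sum_{j:(i,j)\in E'}c_{ij}$, one has $\dfrac{\sum_{(i,j)\in E_{G'}(S,\bar S)}c_{ij}}{\sum_{i\in S}c'_i}\ge \dfrac{C_1}{6C_2}$. (P5) Every vertex $i\in V$ has degree $d(i)$ satisfying $\delta C\ln n< d(i)<4C\ln n$. Asymptotic notation refers to $n\to\infty$. *)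

theory Defs
  imports Complex_Main
begin

definition simple_graph :: "nat \<Rightarrow> (nat \<Rightarrow> nat \<Rightarrow> bool) \<Rightarrow> bool" where
  "simple_graph n E \<longleftrightarrow>
     (\<forall>i j. E i j \<longrightarrow> i < n \<and> j < n \<and> i \<noteq> j) \<and> (\<forall>i j. E i j \<longrightarrow> E j i)"

definition degree :: "(nat \<Rightarrow> nat \<Rightarrow> bool) \<Rightarrow> nat \<Rightarrow> nat" where
  "degree E i = card {j. E i j}"

definition conductance :: "(nat \<Rightarrow> nat \<Rightarrow> bool) \<Rightarrow> (nat \<Rightarrow> nat \<Rightarrow> real) \<Rightarrow> bool" where
  "conductance E c \<longleftrightarrow> (\<forall>i j. E i j \<longrightarrow> c i j = c j i \<and> c i j > 0)"

text \<open>c_i = sum of conductances of edges at i (vertex set {..<n}).\<close>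
definition total_cond :: "nat \<Rightarrow> (nat \<Rightarrow> nat \<Rightarrow> bool) \<Rightarrow> (nat \<Rightarrow> nat \<Rightarrow> real) \<Rightarrow> nat \<Rightarrow> real" where
  "total_cond n E c i = (\<Sum>j\<in>{j. j < n \<and> E i j}. c i j)"

definition connected_graph :: "nat \<Rightarrow> (nat \<Rightarrow> nat \<Rightarrow> bool) \<Rightarrow> bool" where
  "connected_graph n E \<longleftrightarrow> (\<forall>i<n. \<forall>j<n. E\<^sup>*\<^sup>* i j)"

definition is_cycle :: "nat \<Rightarrow> (nat \<Rightarrow> nat \<Rightarrow> bool) \<Rightarrow> nat list \<Rightarrow> bool" where
  "is_cycle n E vs \<longleftrightarrow> length vs \<ge> 3 \<and> distinct vs \<and> set vs \<subseteq> {..<n} \<and>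
     (\<forall>k<length vs. E (vs ! k) (vs ! ((k + 1) mod length vs)))"

text \<open>The (undirected) edge set of a cycle; two cycles are the same iff their edge sets agree.\<close>
definition cycle_edges :: "nat list \<Rightarrow> nat set set" where
  "cycle_edges vs = {{vs ! k, vs ! ((k + 1) mod length vs)} | k. k < length vs}"

definition dist_ge :: "(nat \<Rightarrow> nat \<Rightarrow> bool) \<Rightarrow> nat set \<Rightarrow> nat set \<Rightarrow> real \<Rightarrow> bool" where
  "dist_ge E A B L \<longleftrightarrow> (\<forall>u\<in>A. \<forall>v\<in>B. \<forall>k::nat. real k < L \<longrightarrow> \<not> (E ^^ k) u v)"

definition short_cycle :: "nat \<Rightarrow> nat list \<Rightarrow> bool" where
  "short_cycle n vs \<longleftrightarrow> real (length vs) \<le> ln (real n) / (10 * ln (ln (real n)))"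

definition proper :: "real \<Rightarrow> real \<Rightarrow> nat \<Rightarrow> real \<Rightarrow> real \<Rightarrow> nat \<Rightarrow> (nat \<Rightarrow> nat \<Rightarrow> bool) \<Rightarrow> bool" where
  "proper C1 C2 K C \<delta> n E \<longleftrightarrow>
     simple_graph n E \<and>
     \<comment> \<open>P1\<close>
     connected_graph n E \<and>
     \<comment> \<open>P2\<close>
     (\<forall>vs ws. is_cycle n E vs \<and> is_cycle n E ws \<and> short_cycle n vs \<and> short_cycle n ws \<and>
        cycle_edges vs \<noteq> cycle_edges ws \<longrightarrow>
        dist_ge E (set vs) (set ws) (ln (real n) / ln (ln (real n)))) \<and>
     \<comment> \<open>P3\<close>
     (\<forall>l\<in>{3,5,7}. \<exists>vs. is_cycle n E vs \<and> length vs = l) \<and>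
     \<comment> \<open>P4\<close>
     (\<forall>c L S. conductance E c \<and> (\<forall>i j. E i j \<longrightarrow> C1 \<le> c i j \<and> c i j \<le> C2) \<and>
        L \<subseteq> {..<n} \<and> card L \<le> K \<and> S \<subseteq> {..<n} - L \<and> S \<noteq> {} \<and> real (card S) \<le> real n / 2 \<longrightarrow>
        (\<Sum>(i,j)\<in>{(i,j). i \<in> S \<and> j \<in> {..<n} - (L \<union> S) \<and> E i j}. c i j) /
        (\<Sum>i\<in>S. \<Sum>j\<in>{j. j \<in> {..<n} - L \<and> E i j}. c i j)
        \<ge> C1 / (6 * C2)) \<and>
     \<comment> \<open>P5\<close>
     (\<forall>i<n. \<delta> * C * ln (real n) < real (degree E i) \<and> real (degree E i) < 4 * C * ln (real n))"

text \<open>Harmonicity part of the potential distribution: Kirchhoff at every vertex outside \<Gamma>.\<close>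
definition harmonic_off :: "nat \<Rightarrow> (nat \<Rightarrow> nat \<Rightarrow> bool) \<Rightarrow> (nat \<Rightarrow> nat \<Rightarrow> real) \<Rightarrow> nat set \<Rightarrow>
    (nat \<Rightarrow> real) \<Rightarrow> bool" where
  "harmonic_off n E c \<Gamma> V \<longleftrightarrow>
     (\<forall>i<n. i \<notin> \<Gamma> \<longrightarrow> (\<Sum>j\<in>{j. j < n \<and> E i j}. c i j * (V i - V j)) = 0)"

end

theory Submission
  imports Defs
begin

text \<open>
  Proof plan.  Write I for the interior vertices (those outside the boundary \<Gamma>), w for the
  conductances extended by 0 to non-edges, and D = \<delta> C ln n for the lower degree bound (P5).

  (1) Maximum principle: on a connected graph (P1) a potential with boundary values in [0,1]
      takes all its values in [0,1].
  (2) Oscillation: V varies by O(1/D) on I.  Call f flux-bounded if at every interior vertex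
      its outflow into I is at most the conductance to \<Gamma>; V and -V are.  Lowering a threshold
      t by h, the cut weight of the superlevel set S = {f \<ge> t} is at most w(S,\<Gamma>)/h plus the
      weight of the layer between t - h and t.  Large degrees make any nonempty superlevel set
      reach size ~D after a drop O(1/D); the expansion property (P4) makes a set of size
      s \<le> n/2 grow by a constant factor after a drop O(1/s).  As the sizes start at ~D and grow
      geometrically, the drops sum to O(1/D): a majority of I lies within O(1/D) of the
      maximum of f.  Applied to V and -V, the two majorities meet, so the oscillation of V on
      I is O(1/D).
  (3) Averaging: harmonicity makes the total flow from I to \<Gamma> vanish, so the
      conductance-weighted average of the boundary values is an average of interior values,
      up to the boundary-boundary edges whose relative weight is O(K^2/D).

  Only the
  properties (P1), (P4) and (P5) of proper graphs are needed.
\<close>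

text \<open>Conductances extended by zero to non-edges, so that sums over neighbourhoods become
  sums over vertex sets.\<close>
definition wt :: "(nat \<Rightarrow> nat \<Rightarrow> bool) \<Rightarrow> (nat \<Rightarrow> nat \<Rightarrow> real) \<Rightarrow> nat \<Rightarrow> nat \<Rightarrow> real" where
  "wt E c i j = (if E i j then c i j else 0)"

lemma sum_wt_filter:
  "finite X \<Longrightarrow> (\<Sum>j\<in>X. wt E c i j) = (\<Sum>j\<in>{j\<in>X. E i j}. c i j)"
  by (simp only: wt_def sum.inter_filter)

lemma sum_neighbours_wt:
  "(\<Sum>j\<in>{j. j < n \<and> E i j}. c i j * h j) = (\<Sum>j<n. wt E c i j * h j)"
proof -
  have "{j. j < n \<and> E i j} = {j\<in>{..<n}. E i j}" by auto
  then have "(\<Sum>j\<in>{j. j < n \<and> E i j}. c i j * h j) = (\<Sum>j<n. if E i j then c i j * h j else 0)"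
    by (simp only: sum.inter_filter[OF finite_lessThan])
  also have "\<dots> = (\<Sum>j<n. wt E c i j * h j)" by (intro sum.cong refl) (simp add: wt_def)
  finally show ?thesis .
qed

lemma total_cond_wt: "total_cond n E c i = (\<Sum>j<n. wt E c i j)"
  using sum_neighbours_wt[where h = "\<lambda>_. 1"] unfolding total_cond_def by simp

lemma sum_edge_pairs_wt:
  assumes "finite S" "finite X"
  shows "(\<Sum>(i,j)\<in>{(i,j). i \<in> S \<and> j \<in> X \<and> E i j}. c i j) = (\<Sum>i\<in>S. \<Sum>j\<in>X. wt E c i j)"
proof -
  have "{(i,j). i \<in> S \<and> j \<in> X \<and> E i j} = Sigma S (\<lambda>i. {j\<in>X. E i j})" by auto
  then show ?thesis using assms by (simp add: sum.Sigma sum_wt_filter)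
qed

lemma harmonic_off_neg: "harmonic_off n E c G V \<Longrightarrow> harmonic_off n E c G (\<lambda>i. - V i)"
  unfolding harmonic_off_def by (simp add: algebra_simps sum_subtractf sum_negf)

lemma harmonic_max_spreads:
  assumes cond: "conductance E c" and harm: "harmonic_off n E c G V"
    and i: "i < n" "i \<notin> G" and max: "\<And>j. j < n \<Longrightarrow> V j \<le> V i"
    and e: "E i j" "j < n"
  shows "V j = V i"
proof -
  let ?N = "{j. j < n \<and> E i j}"
  have terms_nonneg: "0 \<le> c i k * (V i - V k)" if "k \<in> ?N" for k
  proof -
    from that have "0 < c i k" "V k \<le> V i" using cond max unfolding conductance_def by auto
    then show ?thesis by simp
  qed
  have "(\<Sum>k\<in>?N. c i k * (V i - V k)) = 0" using harm i unfolding harmonic_off_def by blast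
  then have "c i j * (V i - V j) = 0" using sum_nonneg_eq_0_iff[of ?N, OF _ terms_nonneg] e by simp
  moreover have "0 < c i j" using cond e unfolding conductance_def by blast
  ultimately show ?thesis by simp
qed

text \<open>Maximum principle: on a connected graph an upper bound for V on the (nonempty) boundary
  bounds V everywhere, since the set of maximisers would otherwise spread to the boundary.\<close>
lemma maximum_principle:
  assumes sg: "simple_graph n E" and cond: "conductance E c" and conn: "connected_graph n E"
    and G: "G \<subseteq> {..<n}" "G \<noteq> {}" and harm: "harmonic_off n E c G V"
    and bound: "\<And>j. j \<in> G \<Longrightarrow> V j \<le> b"
  shows "\<forall>i<n. V i \<le> b"
proof (rule ccontr)
  assume "\<not> (\<forall>i<n. V i \<le> b)"
  then obtain i1 where i1: "i1 < n" "b < V i1" by auto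
  obtain i0 where i0: "i0 < n" and max_eq: "Max (V ` {..<n}) = V i0"
    using obtains_MAX[of "{..<n}" V] i1(1) by auto
  have max: "V j \<le> V i0" if "j < n" for j using that max_eq[symmetric] by simp
  have above: "b < V i0" using max[OF i1(1)] i1(2) by simp
  have "y < n \<and> V y = V i0" if "E\<^sup>*\<^sup>* i0 y" for y
    using that
  proof (induction rule: rtranclp_induct)
    case (step y z)
    have "z < n" using sg step(2) unfolding simple_graph_def by blast
    moreover have "y \<notin> G" using bound step(3) above by force
    ultimately have "V z = V y"
      using harmonic_max_spreads[OF cond harm _ _ _ step(2)] step(3) max by simp
    with \<open>z < n\<close> step(3) show ?case by simp
  qed (use i0 in simp)
  moreover obtain g where g: "g \<in> G" using G(2) by auto
  moreover have "E\<^sup>*\<^sup>* i0 g" using conn i0 g G(1) unfolding connected_graph_def by auto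
  ultimately have "V g = V i0" by blast
  then show False using bound[OF g] above by simp
qed

lemma potential_in_unit_interval:
  assumes "simple_graph n E" "conductance E c" "connected_graph n E"
    and "G \<subseteq> {..<n}" "G \<noteq> {}" "harmonic_off n E c G V"
    and "\<And>j. j \<in> G \<Longrightarrow> 0 \<le> V j \<and> V j \<le> 1"
  shows "\<forall>i<n. 0 \<le> V i \<and> V i \<le> 1"
proof -
  have "\<forall>i<n. V i \<le> 1" using maximum_principle[of n E c G V 1] assms by blast
  moreover have "\<forall>i<n. - V i \<le> 0"
    using maximum_principle[of n E c G "\<lambda>i. - V i" 0] assms harmonic_off_neg by fastforce
  ultimately show ?thesis by force
qed

lemma majorities_intersect:
  assumes "A \<subseteq> {..<n}" "B \<subseteq> {..<n}" "real n < 2 * real (card A)" "real n < 2 * real (card B)"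
  shows "A \<inter> B \<noteq> {}"
proof
  assume "A \<inter> B = {}"
  then have "card A + card B = card (A \<union> B)"
    using assms(1,2) finite_subset by (metis card_Un_disjoint finite_lessThan)
  also have "\<dots> \<le> n" using card_mono[of "{..<n}" "A \<union> B"] assms(1,2) by simp
  finally show False using assms(3,4) by linarith
qed

lemma geometric_growth_dichotomy:
  fixes g :: "real \<Rightarrow> nat" and N :: nat and A B q t0 :: real
  assumes antitone: "\<And>s t. s \<le> t \<Longrightarrow> g t \<le> g s"
    and start: "1 \<le> A" "A \<le> real (g t0)"
    and q: "1 < q" and B: "0 \<le> B"
    and grow: "\<And>t. 1 \<le> g t \<Longrightarrow> 2 * real (g t) \<le> real N \<Longrightarrow>
                 q * real (g t) \<le> real (g (t - B / real (g t)))"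
  defines "\<tau> k \<equiv> t0 - B / A * (\<Sum>j<k. (1 / q) ^ j)"
  shows "real N < 2 * real (g (\<tau> k)) \<or> A * q ^ k \<le> real (g (\<tau> k))"
proof (induction k)
  case 0
  then show ?case using start unfolding \<tau>_def by simp
next
  case (Suc k)
  have \<tau>_Suc: "\<tau> (Suc k) = \<tau> k - B / A * (1 / q) ^ k" unfolding \<tau>_def by (simp add: algebra_simps)
  show ?case
  proof (cases "real N < 2 * real (g (\<tau> k))")
    case True
    moreover have "g (\<tau> k) \<le> g (\<tau> (Suc k))"
      using \<tau>_Suc B start q by (intro antitone) simp
    ultimately show ?thesis by simp
  next
    case False
    define s where "s = real (g (\<tau> k))"
    have s_ge: "A * q ^ k \<le> s" using Suc False s_def by simp
    have "1 * 1 \<le> A * q ^ k" using start q by (intro mult_mono) auto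
    then have one_le: "1 \<le> A * q ^ k" by simp
    have "B / s \<le> B / (A * q ^ k)" using s_ge one_le B by (intro divide_left_mono) auto
    also have "\<dots> = B / A * (1 / q) ^ k" by (simp add: power_one_over)
    finally have "\<tau> (Suc k) \<le> \<tau> k - B / s" using \<tau>_Suc by simp
    then have "g (\<tau> k - B / s) \<le> g (\<tau> (Suc k))" by (rule antitone)
    moreover have "q * s \<le> real (g (\<tau> k - B / s))"
      using grow[of "\<tau> k"] s_ge one_le False unfolding s_def by simp
    moreover have "A * q ^ Suc k \<le> q * s" using s_ge q by simp
    ultimately show ?thesis by simp
  qed
qed

text \<open>Since g \<le> N, the second alternative fails once q^k > N; the drops form a geometric series,
  so g exceeds N/2 at a threshold at most B/A (1 + \<rho>)/\<rho> below t0.\<close>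
lemma threshold_by_geometric_growth:
  fixes g :: "real \<Rightarrow> nat" and N :: nat and A B \<rho> t0 :: real
  assumes antitone: "\<And>s t. s \<le> t \<Longrightarrow> g t \<le> g s"
    and bounded: "\<And>t. g t \<le> N"
    and start: "1 \<le> A" "A \<le> real (g t0)"
    and rate: "0 < \<rho>" and B: "0 \<le> B"
    and grow: "\<And>t. 1 \<le> g t \<Longrightarrow> 2 * real (g t) \<le> real N \<Longrightarrow>
                 (1 + \<rho>) * real (g t) \<le> real (g (t - B / real (g t)))"
  shows "\<exists>\<tau>. t0 - B / A * ((1 + \<rho>) / \<rho>) \<le> \<tau> \<and> real N < 2 * real (g \<tau>)"
proof -
  define q where "q = 1 + \<rho>"
  define \<tau> where "\<tau> k = t0 - B / A * (\<Sum>j<k. (1 / q) ^ j)" for k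
  have q1: "1 < q" using rate q_def by simp
  obtain k where k: "real N < q ^ k" using real_arch_pow[OF q1] by blast
  have "\<not> A * q ^ k \<le> real (g (\<tau> k))"
    using k bounded[of "\<tau> k"] start q1 by (smt (verit) mult_le_cancel_right1 of_nat_mono zero_less_power)
  moreover have "real N < 2 * real (g (\<tau> k)) \<or> A * q ^ k \<le> real (g (\<tau> k))"
    unfolding \<tau>_def
    by (rule geometric_growth_dichotomy[where g = g and N = N, OF antitone start q1 B])
      (use grow in \<open>unfold q_def\<close>)
  ultimately have majority: "real N < 2 * real (g (\<tau> k))" by blast
  have "(\<Sum>j<k. (1 / q) ^ j) \<le> 1 / (1 - 1 / q)"
    using q1 by (simp add: sum_gp_strict divide_right_mono)
  also have "\<dots> = (1 + \<rho>) / \<rho>" using rate unfolding q_def by (simp add: field_simps)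
  finally have "B / A * (\<Sum>j<k. (1 / q) ^ j) \<le> B / A * ((1 + \<rho>) / \<rho>)"
    using B start by (intro mult_left_mono) auto
  then have "t0 - B / A * ((1 + \<rho>) / \<rho>) \<le> \<tau> k" unfolding \<tau>_def by simp
  with majority show ?thesis by blast
qed

lemma ratio_deviation:
  fixes v lo W X Y A B Q D :: real
  assumes X: "lo * A \<le> X" "X \<le> (lo + W) * A" and Y: "0 \<le> Y" "Y \<le> B"
    and v: "lo \<le> v" "v \<le> lo + W" "0 \<le> v" "v \<le> 1"
    and AB: "0 \<le> A" "0 \<le> B" and D: "0 < D" "D \<le> A + B" and Q: "B \<le> Q"
  shows "\<bar>v - (X + Y) / (A + B)\<bar> \<le> W + Q / D"
proof -
  have pos: "0 < A + B" using D by linarith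
  have "\<bar>v * A - X\<bar> \<le> W * A"
    using X v AB mult_right_mono[of lo v A] mult_right_mono[of v "lo + W" A]
    by (simp add: abs_le_iff algebra_simps)
  moreover have "\<bar>v * B - Y\<bar> \<le> B"
  proof -
    have "0 \<le> v * B" "v * B \<le> B" using v AB by (auto simp: mult_left_le_one_le)
    then show ?thesis unfolding abs_le_iff using Y by linarith
  qed
  moreover have "\<bar>v * (A + B) - (X + Y)\<bar> \<le> \<bar>v * A - X\<bar> + \<bar>v * B - Y\<bar>"
    using abs_triangle_ineq[of "v * A - X" "v * B - Y"] by (simp add: algebra_simps)
  ultimately have "\<bar>v * (A + B) - (X + Y)\<bar> \<le> W * A + B" by linarith
  moreover have "v - (X + Y) / (A + B) = (v * (A + B) - (X + Y)) / (A + B)"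
    using pos by (simp add: field_simps)
  then have "\<bar>v - (X + Y) / (A + B)\<bar> = \<bar>v * (A + B) - (X + Y)\<bar> / (A + B)"
    using pos by simp
  ultimately have "\<bar>v - (X + Y) / (A + B)\<bar> \<le> (W * A + B) / (A + B)"
    using pos by (simp add: divide_right_mono)
  also have "\<dots> \<le> W + B / (A + B)"
  proof -
    have "0 \<le> W" using v by simp
    then have "W * A \<le> W * (A + B)" using AB by (intro mult_left_mono) auto
    then show ?thesis using pos by (simp add: add_divide_distrib divide_le_eq)
  qed
  also have "B / (A + B) \<le> Q / D" using AB D Q by (intro frac_le) auto
  finally show ?thesis by simp
qed

locale network =
  fixes n :: nat and E :: "nat \<Rightarrow> nat \<Rightarrow> bool" and c :: "nat \<Rightarrow> nat \<Rightarrow> real"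
    and G :: "nat set" and C1 C2 :: real and K :: nat and D \<Lambda> :: real
  assumes simple: "simple_graph n E"
    and cond: "conductance E c"
    and cond_bounds: "\<And>i j. E i j \<Longrightarrow> C1 \<le> c i j \<and> c i j \<le> C2"
    and C1_pos: "0 < C1" and C1_le_C2: "C1 \<le> C2"
    and boundary: "G \<subseteq> {..<n}" "G \<noteq> {}" "card G \<le> K"
    and degree_bounds: "\<And>i. i < n \<Longrightarrow> D < real (degree E i) \<and> real (degree E i) < \<Lambda> * D"
    and degree_large: "2 * real K \<le> D" "8 * C2 \<le> C1 * D"
begin

abbreviation w :: "nat \<Rightarrow> nat \<Rightarrow> real" where "w \<equiv> wt E c"

definition interior :: "nat set" where "interior = {..<n} - G"

definition ew :: "nat set \<Rightarrow> nat set \<Rightarrow> real" where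
  "ew S U = (\<Sum>i\<in>S. \<Sum>j\<in>U. w i j)"

lemma C2_pos: "0 < C2" using C1_pos C1_le_C2 by linarith

lemma finite_boundary: "finite G" using boundary(1) finite_subset by blast

lemma K_pos: "1 \<le> K"
  using boundary(2,3) finite_boundary by (metis card_0_eq le_trans less_one not_le)

lemma D_pos: "0 < D" using degree_large(1) K_pos by linarith

lemma n_pos: "0 < n" using boundary(1,2) by auto

lemma \<Lambda>_pos: "0 < \<Lambda>"
  using degree_bounds[OF n_pos] D_pos by (smt (verit) zero_less_mult_iff)

lemma finite_interior: "finite interior" unfolding interior_def by simp

lemma interior_sub: "interior \<subseteq> {..<n}" unfolding interior_def by auto

lemma edge_in_range: "E i j \<Longrightarrow> i < n \<and> j < n"
  using simple unfolding simple_graph_def by blast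

lemma w_nonneg: "0 \<le> w i j" using cond_bounds[of i j] C1_pos by (auto simp: wt_def)

lemma w_le: "w i j \<le> C2" using cond_bounds[of i j] C2_pos by (auto simp: wt_def)

lemma w_sym: "w i j = w j i"
  using cond simple unfolding wt_def conductance_def simple_graph_def by metis

lemma ew_nonneg: "0 \<le> ew S U" unfolding ew_def by (intro sum_nonneg w_nonneg)

lemma ew_sym: "ew S U = ew U S"
  unfolding ew_def by (subst sum.swap) (simp add: w_sym)

lemma ew_union:
  "finite U \<Longrightarrow> finite U' \<Longrightarrow> U \<inter> U' = {} \<Longrightarrow> ew S (U \<union> U') = ew S U + ew S U'"
  unfolding ew_def by (simp add: sum.union_disjoint sum.distrib)

lemma ew_le_card: "ew S U \<le> real (card S) * (C2 * real (card U))"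
proof (cases "finite S \<and> finite U")
  case True
  have "(\<Sum>j\<in>U. w i j) \<le> C2 * real (card U)" for i
    using sum_bounded_above[of U "w i" C2] w_le by (simp add: mult.commute)
  then show ?thesis unfolding ew_def by (intro sum_bounded_above) simp
qed (auto simp: ew_def)

lemma degree_as_card: "i < n \<Longrightarrow> degree E i = card {j\<in>{..<n}. E i j}"
  unfolding degree_def using edge_in_range by (metis (no_types, lifting) lessThan_iff)

lemma row_le_degree: "i < n \<Longrightarrow> (\<Sum>j<n. w i j) \<le> C2 * (\<Lambda> * D)"
proof -
  assume i: "i < n"
  have "(\<Sum>j<n. w i j) = (\<Sum>j\<in>{j\<in>{..<n}. E i j}. c i j)" by (simp add: sum_wt_filter)
  also have "\<dots> \<le> real (degree E i) * C2"
    unfolding degree_as_card[OF i] by (rule sum_bounded_above) (use cond_bounds in auto)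
  also have "\<dots> \<le> (\<Lambda> * D) * C2" using degree_bounds[OF i] C2_pos by simp
  finally show ?thesis by (simp add: mult.commute)
qed

lemma ew_le_degree:
  assumes "S \<subseteq> {..<n}" "U \<subseteq> {..<n}"
  shows "ew S U \<le> C2 * (\<Lambda> * D) * real (card U)"
proof -
  have "ew S U = (\<Sum>j\<in>U. \<Sum>i\<in>S. w j i)" using ew_sym unfolding ew_def by simp
  also have "\<dots> \<le> (\<Sum>j\<in>U. \<Sum>i<n. w j i)"
    using assms by (intro sum_mono sum_mono2) (auto simp: w_nonneg)
  also have "\<dots> \<le> (\<Sum>j\<in>U. C2 * (\<Lambda> * D))" using assms by (intro sum_mono row_le_degree) auto
  finally show ?thesis by (simp add: mult.commute)
qed

lemma row_lower:
  assumes i: "i < n" and X: "X \<subseteq> {..<n}"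
  shows "C1 * (real (degree E i) - real (card ({..<n} - X))) \<le> (\<Sum>j\<in>X. w i j)"
proof -
  have fX: "finite X" using X finite_subset by blast
  have "{j. E i j} \<subseteq> {j\<in>X. E i j} \<union> ({..<n} - X)" using edge_in_range by auto
  then have "degree E i \<le> card ({j\<in>X. E i j} \<union> ({..<n} - X))"
    unfolding degree_def using fX by (intro card_mono) auto
  also have "\<dots> \<le> card {j\<in>X. E i j} + card ({..<n} - X)" by (rule card_Un_le)
  finally have "C1 * (real (degree E i) - real (card ({..<n} - X))) \<le> C1 * real (card {j\<in>X. E i j})"
    using C1_pos by (intro mult_left_mono) auto
  also have "\<dots> \<le> (\<Sum>j\<in>{j\<in>X. E i j}. c i j)"
    using sum_bounded_below[of "{j\<in>X. E i j}" C1 "c i"] cond_bounds by (simp add: mult.commute)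
  also have "\<dots> = (\<Sum>j\<in>X. w i j)" using fX by (simp add: sum_wt_filter)
  finally show ?thesis .
qed

text \<open>Since degrees exceed D while the boundary has at most K \<le> D/2 vertices, every interior
  vertex sends weight at least C1 (D/2 - |X|) into the interior with X removed.\<close>
lemma ew_interior_lower:
  assumes S: "S \<subseteq> interior" and X: "finite X"
  shows "real (card S) * (C1 * (D / 2 - real (card X))) \<le> ew S (interior - X)"
  unfolding ew_def
proof (rule sum_bounded_below)
  fix i assume "i \<in> S"
  then have i: "i < n" using S interior_sub by auto
  have "{..<n} - (interior - X) \<subseteq> G \<union> X" unfolding interior_def by auto
  then have "card ({..<n} - (interior - X)) \<le> card (G \<union> X)"
    using finite_boundary X by (intro card_mono) auto
  also have "\<dots> \<le> card G + card X" by (rule card_Un_le)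
  finally have "D / 2 - real (card X) \<le> real (degree E i) - real (card ({..<n} - (interior - X)))"
    using boundary(3) degree_bounds[OF i] degree_large(1) by linarith
  then have "C1 * (D / 2 - real (card X)) \<le> C1 * (real (degree E i) - real (card ({..<n} - (interior - X))))"
    using C1_pos by (intro mult_left_mono) auto
  also have "\<dots> \<le> (\<Sum>j\<in>interior - X. w i j)" using interior_sub by (intro row_lower i) auto
  finally show "C1 * (D / 2 - real (card X)) \<le> (\<Sum>j\<in>interior - X. w i j)" .
qed

text \<open>By symmetry of the weights, the flows of f inside a finite set cancel.\<close>
lemma internal_flow_zero:
  assumes "finite S"
  shows "(\<Sum>i\<in>S. \<Sum>j\<in>S. w i j * (f i - f j)) = (0::real)"
proof -
  let ?X = "(\<Sum>i\<in>S. \<Sum>j\<in>S. w i j * (f i - f j))"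
  have "?X = (\<Sum>j\<in>S. \<Sum>i\<in>S. - (w j i * (f j - f i)))"
    by (subst sum.swap) (simp add: w_sym algebra_simps)
  also have "\<dots> = - ?X" by (simp add: sum_negf)
  finally show ?thesis by linarith
qed

lemma outflow_eq:
  assumes "S \<subseteq> interior"
  shows "(\<Sum>i\<in>S. \<Sum>j\<in>interior. w i j * (f i - f j)) = (\<Sum>i\<in>S. \<Sum>j\<in>interior - S. w i j * (f i - f j))"
proof -
  have fS: "finite S" using assms finite_interior finite_subset by blast
  have "(\<Sum>i\<in>S. \<Sum>j\<in>interior. w i j * (f i - f j)) =
        (\<Sum>i\<in>S. \<Sum>j\<in>interior - S. w i j * (f i - f j)) + (\<Sum>i\<in>S. \<Sum>j\<in>S. w i j * (f i - f j))"
    using assms finite_interior by (simp add: sum.subset_diff[of S interior] sum.distrib)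
  then show ?thesis using internal_flow_zero[OF fS] by simp
qed

text \<open>f is flux-bounded if at each interior vertex its outflow into the interior is at most the
  conductance to the boundary.  Harmonic functions with values in [0,1] and their negatives are.\<close>
definition flux_bounded :: "(nat \<Rightarrow> real) \<Rightarrow> bool" where
  "flux_bounded f \<longleftrightarrow>
     (\<forall>i\<in>interior. (\<Sum>j\<in>interior. w i j * (f i - f j)) \<le> (\<Sum>j\<in>G. w i j))"

definition level :: "(nat \<Rightarrow> real) \<Rightarrow> real \<Rightarrow> nat" where
  "level f t = card {i\<in>interior. t \<le> f i}"

lemma level_antimono: "s \<le> t \<Longrightarrow> level f t \<le> level f s"
  unfolding level_def using finite_interior by (intro card_mono) auto

lemma level_le: "level f t \<le> n"
proof -
  have "level f t \<le> card {..<n}" unfolding level_def using interior_sub by (intro card_mono) auto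
  then show ?thesis by simp
qed

text \<open>Lowering the threshold from t to t - h: the edges from S = {f \<ge> t} to vertices below
  t - h carry flow at least h each, and the total flow out of S is at most the boundary
  weight of S, so the cut weight of S is at most w(S,G)/h plus the weight into the layer.\<close>
lemma level_cut_bound:
  fixes t :: real
  assumes f: "flux_bounded f" and h: "0 < h"
  defines "S \<equiv> {i\<in>interior. t \<le> f i}" and "T \<equiv> {i\<in>interior. t - h \<le> f i}"
  shows "ew S (interior - S) \<le> ew S G / h + ew S (T - S)"
proof -
  have SI: "S \<subseteq> interior" and ST: "S \<subseteq> T" and TI: "T \<subseteq> interior"
    using h unfolding S_def T_def by auto
  have "ew S (interior - T) \<le> (\<Sum>i\<in>S. \<Sum>j\<in>interior - T. w i j * (f i - f j) / h)"
    unfolding ew_def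
  proof (intro sum_mono)
    fix i j assume "i \<in> S" "j \<in> interior - T"
    then have "1 \<le> (f i - f j) / h" using h unfolding S_def T_def by (auto simp: field_simps)
    then have "w i j * 1 \<le> w i j * ((f i - f j) / h)" by (intro mult_left_mono w_nonneg)
    then show "w i j \<le> w i j * (f i - f j) / h" by simp
  qed
  also have "\<dots> = (\<Sum>i\<in>S. \<Sum>j\<in>interior - T. w i j * (f i - f j)) / h"
    by (simp add: sum_divide_distrib)
  also have "\<dots> \<le> (\<Sum>i\<in>S. \<Sum>j\<in>interior - S. w i j * (f i - f j)) / h"
  proof (intro divide_right_mono sum_mono sum_mono2)
    fix i j assume "i \<in> S" "j \<in> (interior - S) - (interior - T)"
    then have "0 \<le> f i - f j" unfolding S_def by auto
    then show "0 \<le> w i j * (f i - f j)" by (intro mult_nonneg_nonneg w_nonneg)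
  qed (use finite_interior ST h in auto)
  also have "\<dots> = (\<Sum>i\<in>S. \<Sum>j\<in>interior. w i j * (f i - f j)) / h" using outflow_eq[OF SI] by simp
  also have "\<dots> \<le> ew S G / h"
    unfolding ew_def using f h SI unfolding flux_bounded_def by (intro divide_right_mono sum_mono) auto
  finally have "ew S (interior - T) \<le> ew S G / h" .
  moreover have "ew S (interior - S) = ew S (interior - T) + ew S (T - S)"
  proof -
    have "interior - S = (interior - T) \<union> (T - S)" using ST TI by auto
    moreover have "finite (T - S)" using TI finite_interior finite_subset by blast
    moreover have "(interior - T) \<inter> (T - S) = {}" by auto
    ultimately show ?thesis using finite_interior ew_union[of "interior - T" "T - S" S] by simp
  qed
  ultimately show ?thesis by linarith
qed

text \<open>Descending by 8 C2 K / (C1 D) from any nonempty superlevel set reaches a superlevel set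
  with at least C1 D / (8 C2) vertices: a small set S has cut weight about C1 D |S| / 2, which
  the boundary and the vertices just below the threshold must absorb.\<close>
lemma small_set_growth:
  assumes f: "flux_bounded f" and nonempty: "1 \<le> level f t"
  shows "C1 * D / (8 * C2) \<le> real (level f (t - 8 * C2 * real K / (C1 * D)))"
proof -
  define h where "h = 8 * C2 * real K / (C1 * D)"
  define S where "S = {i\<in>interior. t \<le> f i}"
  define T where "T = {i\<in>interior. t - h \<le> f i}"
  define s where "s = real (card S)"
  have h_pos: "0 < h" unfolding h_def using C1_pos C2_pos K_pos D_pos by simp
  have SI: "S \<subseteq> interior" and ST: "S \<subseteq> T" and TI: "T \<subseteq> interior"
    using h_pos unfolding S_def T_def by auto
  have fin_T: "finite T" using TI finite_interior finite_subset by blast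
  have s1: "1 \<le> s" using nonempty unfolding s_def S_def level_def by simp
  have level_T: "level f (t - h) = card T" unfolding level_def T_def by simp
  have T_ge_S: "s \<le> real (card T)" unfolding s_def using card_mono[OF fin_T ST] by simp
  have target_small: "C1 * D / (8 * C2) \<le> D / 8"
    using C1_le_C2 C1_pos D_pos by (simp add: field_simps mult_right_mono)
  show ?thesis
  proof (cases "D / 4 < s")
    case True
    then show ?thesis using target_small T_ge_S level_T unfolding h_def by simp
  next
    case False
    have "s * (C1 * (D / 4)) \<le> s * (C1 * (D / 2 - s))"
      using False s1 C1_pos by (intro mult_left_mono) auto
    also have "\<dots> \<le> ew S (interior - S)"
      using ew_interior_lower[OF SI] SI finite_interior finite_subset unfolding s_def by blast
    also have "\<dots> \<le> ew S G / h + ew S (T - S)"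
      unfolding S_def T_def by (rule level_cut_bound[OF f h_pos])
    also have "\<dots> \<le> s * (C2 * real K) / h + s * (C2 * real (card (T - S)))"
    proof (intro add_mono divide_right_mono)
      show "ew S G \<le> s * (C2 * real K)"
        using ew_le_card[of S G] boundary(3) C2_pos s1 unfolding s_def
        by (smt (verit) mult_left_mono of_nat_mono)
    qed (use ew_le_card h_pos s_def in auto)
    also have "\<dots> = s * (C1 * D / 8 + C2 * real (card (T - S)))"
      unfolding h_def using C1_pos C2_pos K_pos D_pos by (simp add: field_simps)
    finally have "C1 * D / 8 \<le> C2 * real (card (T - S))" using s1 by simp
    then have "C1 * D / (8 * C2) \<le> real (card (T - S))" using C2_pos by (simp add: field_simps)
    also have "\<dots> \<le> real (card T)" using fin_T by (simp add: card_mono)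
    finally show ?thesis using level_T unfolding h_def by simp
  qed
qed

lemma harmonic_balance:
  assumes harm: "harmonic_off n E c G f" and i: "i \<in> interior"
  shows "(\<Sum>j\<in>interior. w i j * (f i - f j)) + (\<Sum>j\<in>G. w i j * (f i - f j)) = 0"
proof -
  have "(\<Sum>j\<in>{j. j < n \<and> E i j}. c i j * (f i - f j)) = 0"
    using harm i unfolding harmonic_off_def interior_def by blast
  then have "(\<Sum>j<n. w i j * (f i - f j)) = 0"
    using sum_neighbours_wt[where h = "\<lambda>j. f i - f j" and c = c] by simp
  moreover have "{..<n} = interior \<union> G" "interior \<inter> G = {}"
    unfolding interior_def using boundary(1) by auto
  ultimately show ?thesis using finite_interior finite_boundary by (simp add: sum.union_disjoint)
qed

lemma harmonic_flux_bounded: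
  assumes harm: "harmonic_off n E c G f"
    and jump: "\<And>i j. i \<in> interior \<Longrightarrow> j \<in> G \<Longrightarrow> f j - f i \<le> 1"
  shows "flux_bounded f"
  unfolding flux_bounded_def
proof
  fix i assume i: "i \<in> interior"
  have "(\<Sum>j\<in>G. w i j * (f j - f i)) = - (\<Sum>j\<in>G. w i j * (f i - f j))"
    by (simp add: sum_negf[symmetric] algebra_simps)
  then have "(\<Sum>j\<in>interior. w i j * (f i - f j)) = (\<Sum>j\<in>G. w i j * (f j - f i))"
    using harmonic_balance[OF harm i] by linarith
  also have "\<dots> \<le> (\<Sum>j\<in>G. w i j)"
    using jump[OF i] w_nonneg by (intro sum_mono) (simp add: mult_left_le)
  finally show "(\<Sum>j\<in>interior. w i j * (f i - f j)) \<le> (\<Sum>j\<in>G. w i j)" .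
qed

lemma boundary_flux_zero:
  assumes harm: "harmonic_off n E c G f"
  shows "(\<Sum>i\<in>interior. \<Sum>j\<in>G. w i j * (f i - f j)) = 0"
proof -
  have "(\<Sum>j\<in>G. w i j * (f i - f j)) = - (\<Sum>j\<in>interior. w i j * (f i - f j))"
    if "i \<in> interior" for i
    using harmonic_balance[OF harm that] by linarith
  then have "(\<Sum>i\<in>interior. \<Sum>j\<in>G. w i j * (f i - f j)) =
             - (\<Sum>i\<in>interior. \<Sum>j\<in>interior. w i j * (f i - f j))"
    by (simp add: sum_negf)
  then show ?thesis using internal_flow_zero[OF finite_interior] by simp
qed

lemma total_cond_split: "total_cond n E c j = (\<Sum>k\<in>interior. w j k) + (\<Sum>k\<in>G. w j k)"
proof -
  have "{..<n} = interior \<union> G" "interior \<inter> G = {}" unfolding interior_def using boundary(1) by auto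
  then show ?thesis using finite_interior finite_boundary by (simp add: total_cond_wt sum.union_disjoint)
qed

lemma boundary_total_cond_lower: "C1 * D \<le> (\<Sum>j\<in>G. total_cond n E c j)"
proof -
  obtain g where g: "g \<in> G" using boundary(2) by blast
  then have g_range: "g < n" using boundary(1) by auto
  have "C1 * D \<le> C1 * (real (degree E g) - real (card ({..<n} - {..<n})))"
    using degree_bounds[OF g_range] C1_pos by simp
  also have "\<dots> \<le> total_cond n E c g" unfolding total_cond_wt by (intro row_lower g_range) simp
  also have "\<dots> \<le> (\<Sum>j\<in>G. total_cond n E c j)"
    using g finite_boundary
    by (intro member_le_sum) (auto simp: total_cond_wt intro!: sum_nonneg w_nonneg)
  finally show ?thesis .
qed

lemma boundary_edges_le: "ew G G \<le> real K ^ 2 * C2"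
proof -
  have "ew G G \<le> real (card G) * (C2 * real (card G))" by (rule ew_le_card)
  also have "\<dots> \<le> real K ^ 2 * C2"
    using boundary(3) C2_pos by (simp add: power2_eq_square mult_mono)
  finally show ?thesis .
qed

text \<open>If the potential varies by at most W over the interior, the conductance-weighted average
  of the boundary values differs from each interior value by at most W plus the relative weight
  of boundary-boundary edges, which is at most K^2 C2 / (C1 D).\<close>
lemma boundary_average_deviation:
  assumes harm: "harmonic_off n E c G V" and V01: "\<And>i. i < n \<Longrightarrow> 0 \<le> V i \<and> V i \<le> 1"
    and i: "i \<in> interior" and spread: "\<And>j. j \<in> interior \<Longrightarrow> lo \<le> V j \<and> V j \<le> lo + W"
  shows "\<bar>V i - (\<Sum>j\<in>G. V j * total_cond n E c j) / (\<Sum>j\<in>G. total_cond n E c j)\<bar>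
           \<le> W + real K ^ 2 * C2 / (C1 * D)"
proof -
  define X where "X = (\<Sum>k\<in>interior. \<Sum>j\<in>G. w k j * V k)"
  define Y where "Y = (\<Sum>j\<in>G. V j * (\<Sum>k\<in>G. w j k))"
  have in_range: "j \<in> G \<Longrightarrow> j < n" for j using boundary(1) by auto
  have "(\<Sum>j\<in>G. V j * (\<Sum>k\<in>interior. w j k)) = (\<Sum>k\<in>interior. \<Sum>j\<in>G. w k j * V j)"
    by (subst sum.swap) (simp add: sum_distrib_left w_sym mult.commute)
  also have "\<dots> = X"
    using boundary_flux_zero[OF harm] unfolding X_def by (simp add: sum_subtractf right_diff_distrib)
  finally have numerator: "(\<Sum>j\<in>G. V j * total_cond n E c j) = X + Y"
    unfolding Y_def total_cond_split by (simp add: distrib_left sum.distrib)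
  have denominator: "(\<Sum>j\<in>G. total_cond n E c j) = ew interior G + ew G G"
    unfolding total_cond_split ew_def by (simp add: sum.distrib ew_sym[unfolded ew_def])
  have "lo * w k j \<le> w k j * V k \<and> w k j * V k \<le> (lo + W) * w k j" if "k \<in> interior" for k j
    using spread[OF that] mult_right_mono[OF _ w_nonneg, of lo "V k" k j]
      mult_right_mono[OF _ w_nonneg, of "V k" "lo + W" k j] by (simp add: mult.commute)
  then have X_bounds: "lo * ew interior G \<le> X" "X \<le> (lo + W) * ew interior G"
    unfolding X_def ew_def sum_distrib_left by (auto intro!: sum_mono)
  have Y_bounds: "0 \<le> Y" "Y \<le> ew G G"
    unfolding Y_def ew_def using V01 in_range
    by (auto intro!: sum_mono sum_nonneg mult_nonneg_nonneg w_nonneg mult_left_le_one_le)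
  have denominator_lower: "C1 * D \<le> ew interior G + ew G G"
    using boundary_total_cond_lower unfolding denominator .
  have "i < n" using i interior_sub by auto
  then have v: "lo \<le> V i" "V i \<le> lo + W" "0 \<le> V i" "V i \<le> 1" using spread[OF i] V01 by auto
  have "0 < C1 * D" using C1_pos D_pos by simp
  from ratio_deviation[OF X_bounds Y_bounds v ew_nonneg ew_nonneg this denominator_lower
    boundary_edges_le]
  show ?thesis unfolding numerator denominator .
qed

text \<open>Property (P4) with the boundary removed, rewritten as an inequality between edge weights.\<close>
lemma expansion_from_ratio:
  assumes S: "S \<subseteq> interior" "S \<noteq> {}"
    and ratio: "\<phi> \<le> (\<Sum>(i,j)\<in>{(i,j). i \<in> S \<and> j \<in> {..<n} - (G \<union> S) \<and> E i j}. c i j) /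
                    (\<Sum>i\<in>S. \<Sum>j\<in>{j. j \<in> {..<n} - G \<and> E i j}. c i j)"
  shows "\<phi> * ew S interior \<le> ew S (interior - S)"
proof -
  have fin_S: "finite S" using S(1) finite_interior finite_subset by blast
  have "{..<n} - (G \<union> S) = interior - S" unfolding interior_def by auto
  then have numerator: "(\<Sum>(i,j)\<in>{(i,j). i \<in> S \<and> j \<in> {..<n} - (G \<union> S) \<and> E i j}. c i j)
      = ew S (interior - S)"
    unfolding ew_def using sum_edge_pairs_wt[OF fin_S, of "interior - S"] finite_interior by simp
  have denominator: "(\<Sum>i\<in>S. \<Sum>j\<in>{j. j \<in> {..<n} - G \<and> E i j}. c i j) = ew S interior"
    unfolding ew_def interior_def by (rule sum.cong[OF refl]) (rule sum_wt_filter[symmetric], simp)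
  have "0 < real (card S) * (C1 * (D / 2))" using S(2) fin_S C1_pos D_pos by (simp add: card_gt_0_iff)
  also have "\<dots> \<le> ew S interior" using ew_interior_lower[OF S(1), of "{}"] by simp
  finally show ?thesis using ratio unfolding numerator denominator by (simp add: pos_le_divide_eq)
qed

end

text \<open>The constants of the oscillation bound: growth factor of expanding level sets, and the
  spread (times D) within which a majority of the interior lies below the maximum.\<close>
definition growth_rate :: "real \<Rightarrow> real \<Rightarrow> real \<Rightarrow> real \<Rightarrow> real" where
  "growth_rate C1 C2 \<Lambda> \<phi> = \<phi> * C1 / (4 * C2 * \<Lambda>)"

definition spread_const :: "real \<Rightarrow> real \<Rightarrow> nat \<Rightarrow> real \<Rightarrow> real \<Rightarrow> real" where
  "spread_const C1 C2 K \<Lambda> \<phi> =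
     8 * C2 * real K / C1 + 32 * C2 ^ 2 * \<Lambda> * real K / (\<phi> * C1 ^ 2) *
       ((1 + growth_rate C1 C2 \<Lambda> \<phi>) / growth_rate C1 C2 \<Lambda> \<phi>)"

definition deviation_const :: "real \<Rightarrow> real \<Rightarrow> nat \<Rightarrow> real \<Rightarrow> real \<Rightarrow> real" where
  "deviation_const C1 C2 K \<Lambda> \<phi> = 2 * spread_const C1 C2 K \<Lambda> \<phi> + real K ^ 2 * C2 / C1"

locale expander_network = network +
  fixes \<phi> :: real
  assumes \<phi>_pos: "0 < \<phi>"
    and expansion: "\<And>S. S \<subseteq> network.interior n G \<Longrightarrow> S \<noteq> {} \<Longrightarrow> 2 * real (card S) \<le> real n \<Longrightarrow>
        \<phi> * network.ew E c S (network.interior n G)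
          \<le> network.ew E c S (network.interior n G - S)"
begin

abbreviation \<rho> :: real where "\<rho> \<equiv> growth_rate C1 C2 \<Lambda> \<phi>"

lemma \<rho>_pos: "0 < \<rho>"
  unfolding growth_rate_def using \<phi>_pos C1_pos C2_pos \<Lambda>_pos by simp

text \<open>An expanding superlevel set of size s \<le> n/2 grows by the factor 1 + \<rho> when the threshold
  drops by 4 C2 \<Lambda> K / (\<phi> C1 s): its cut weight is at least \<phi> C1 D s / 2 by expansion,
  while the boundary can absorb only a quarter of it.\<close>
lemma expansion_growth:
  assumes f: "flux_bounded f" and nonempty: "1 \<le> level f t" and small: "2 * real (level f t) \<le> real n"
  shows "(1 + \<rho>) * real (level f t)
           \<le> real (level f (t - 4 * C2 * \<Lambda> * real K / (\<phi> * C1) / real (level f t)))"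
proof -
  define s where "s = real (level f t)"
  define h where "h = 4 * C2 * \<Lambda> * real K / (\<phi> * C1) / s"
  define S where "S = {i\<in>interior. t \<le> f i}"
  define T where "T = {i\<in>interior. t - h \<le> f i}"
  have s1: "1 \<le> s" using nonempty s_def by simp
  have h_pos: "0 < h" unfolding h_def using C1_pos C2_pos K_pos \<Lambda>_pos \<phi>_pos s1 by simp
  have SI: "S \<subseteq> interior" and ST: "S \<subseteq> T" and TI: "T \<subseteq> interior"
    using h_pos unfolding S_def T_def by auto
  have fin_T: "finite T" using TI finite_interior finite_subset by blast
  have s_card: "s = real (card S)" unfolding s_def S_def level_def by simp
  have level_T: "level f (t - h) = card T" unfolding level_def T_def by simp
  have "\<phi> * (s * (C1 * (D / 2))) \<le> \<phi> * ew S interior"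
    using ew_interior_lower[OF SI, of "{}"] \<phi>_pos unfolding s_card by (intro mult_left_mono) auto
  also have "\<dots> \<le> ew S (interior - S)"
  proof (rule expansion[OF SI])
    show "S \<noteq> {}" using s1 s_card by auto
    show "2 * real (card S) \<le> real n" using small s_card s_def by simp
  qed
  also have "\<dots> \<le> ew S G / h + ew S (T - S)"
    unfolding S_def T_def by (rule level_cut_bound[OF f h_pos])
  also have "\<dots> \<le> C2 * (\<Lambda> * D) * real K / h + C2 * (\<Lambda> * D) * real (card (T - S))"
  proof (intro add_mono divide_right_mono)
    have "ew S G \<le> C2 * (\<Lambda> * D) * real (card G)"
      using SI interior_sub boundary(1) by (intro ew_le_degree) auto
    also have "\<dots> \<le> C2 * (\<Lambda> * D) * real K"
      using boundary(3) C2_pos \<Lambda>_pos D_pos by (intro mult_left_mono) auto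
    finally show "ew S G \<le> C2 * (\<Lambda> * D) * real K" .
    show "ew S (T - S) \<le> C2 * (\<Lambda> * D) * real (card (T - S))"
      using SI TI interior_sub by (intro ew_le_degree) auto
  qed (use h_pos in simp)
  also have "C2 * (\<Lambda> * D) * real K / h = \<phi> * (s * (C1 * (D / 2))) / 2"
    unfolding h_def using C1_pos C2_pos K_pos \<Lambda>_pos \<phi>_pos D_pos s1 by (simp add: field_simps)
  finally have "\<rho> * s \<le> real (card (T - S))"
    unfolding growth_rate_def using C2_pos \<Lambda>_pos D_pos by (simp add: field_simps)
  moreover have "card T = card S + card (T - S)"
    using fin_T ST by (metis card_Diff_subset card_mono finite_subset le_add_diff_inverse)
  ultimately show ?thesis using level_T s_card unfolding h_def s_def by (simp add: algebra_simps)
qed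

lemma majority_threshold:
  assumes f: "flux_bounded f" and nonempty: "interior \<noteq> {}"
  shows "\<exists>\<tau>. real n < 2 * real (level f \<tau>) \<and>
             (\<forall>i\<in>interior. f i \<le> \<tau> + spread_const C1 C2 K \<Lambda> \<phi> / D)"
proof -
  define hA where "hA = 8 * C2 * real K / (C1 * D)"
  define A where "A = C1 * D / (8 * C2)"
  define B where "B = 4 * C2 * \<Lambda> * real K / (\<phi> * C1)"
  obtain i0 where i0: "i0 \<in> interior" and max_eq: "Max (f ` interior) = f i0"
    using obtains_MAX[OF finite_interior nonempty] by metis
  have below_max: "f i \<le> f i0" if "i \<in> interior" for i
    using that max_eq[symmetric] finite_interior by simp
  have "1 \<le> level f (f i0)"
    unfolding level_def using i0 finite_interior by (simp add: Suc_le_eq card_gt_0_iff) blast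
  then have start: "A \<le> real (level f (f i0 - hA))"
    using small_set_growth[OF f] unfolding A_def hA_def by blast
  have A1: "1 \<le> A" unfolding A_def using degree_large(2) C2_pos by simp
  have B_nonneg: "0 \<le> B" unfolding B_def using C1_pos C2_pos \<Lambda>_pos \<phi>_pos by simp
  obtain \<tau> where \<tau>: "f i0 - hA - B / A * ((1 + \<rho>) / \<rho>) \<le> \<tau>" "real n < 2 * real (level f \<tau>)"
    using threshold_by_geometric_growth[where g = "level f", OF level_antimono level_le A1 start \<rho>_pos B_nonneg
        expansion_growth[OF f, folded B_def]] by blast
  have "hA + B / A * ((1 + \<rho>) / \<rho>) = spread_const C1 C2 K \<Lambda> \<phi> / D"
    unfolding spread_const_def hA_def A_def B_def using C1_pos C2_pos D_pos \<phi>_pos \<rho>_pos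
    by (simp add: field_simps power2_eq_square)
  with \<tau> below_max show ?thesis by fastforce
qed

text \<open>The potential varies by at most 2 spread_const / D over the interior: the majorities above
  the thresholds for V and for -V meet.\<close>
lemma potential_oscillation:
  assumes harm: "harmonic_off n E c G V" and V01: "\<And>i. i < n \<Longrightarrow> 0 \<le> V i \<and> V i \<le> 1"
    and nonempty: "interior \<noteq> {}"
  shows "\<exists>lo. \<forall>j\<in>interior. lo \<le> V j \<and> V j \<le> lo + 2 * (spread_const C1 C2 K \<Lambda> \<phi> / D)"
proof -
  let ?s = "spread_const C1 C2 K \<Lambda> \<phi> / D"
  have jump: "V j - V i \<le> 1 \<and> V i - V j \<le> 1" if "i \<in> interior" "j \<in> G" for i j
  proof -
    have "i < n" "j < n" using that interior_sub boundary(1) by auto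
    then show ?thesis using V01[of i] V01[of j] by auto
  qed
  have "flux_bounded V" using harmonic_flux_bounded[OF harm] jump by blast
  then obtain t1 where t1: "real n < 2 * real (level V t1)" "\<forall>i\<in>interior. V i \<le> t1 + ?s"
    using majority_threshold nonempty by blast
  have "flux_bounded (\<lambda>i. - V i)"
    using harmonic_flux_bounded[OF harmonic_off_neg[OF harm]] jump by simp
  then obtain t2 where t2: "real n < 2 * real (level (\<lambda>i. - V i) t2)" "\<forall>i\<in>interior. - V i \<le> t2 + ?s"
    using majority_threshold nonempty by blast
  have "{i\<in>interior. t1 \<le> V i} \<inter> {i\<in>interior. t2 \<le> - V i} \<noteq> {}"
    by (rule majorities_intersect) (use t1(1) t2(1) interior_sub in \<open>auto simp: level_def\<close>)
  then obtain i where "t1 \<le> V i" "t2 \<le> - V i" by blast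
  then have "\<forall>j\<in>interior. t1 - ?s \<le> V j \<and> V j \<le> t1 - ?s + 2 * ?s" using t1(2) t2(2) by force
  then show ?thesis by blast
qed

theorem potential_deviation:
  assumes conn: "connected_graph n E" and harm: "harmonic_off n E c G V"
    and boundary_values: "\<And>j. j \<in> G \<Longrightarrow> 0 \<le> V j \<and> V j \<le> 1" and i: "i \<in> interior"
  shows "\<bar>V i - (\<Sum>j\<in>G. V j * total_cond n E c j) / (\<Sum>j\<in>G. total_cond n E c j)\<bar>
           \<le> deviation_const C1 C2 K \<Lambda> \<phi> / D"
proof -
  have V01: "\<forall>i<n. 0 \<le> V i \<and> V i \<le> 1"
    using potential_in_unit_interval[OF simple cond conn boundary(1,2) harm boundary_values] .
  obtain lo where "\<forall>j\<in>interior. lo \<le> V j \<and> V j \<le> lo + 2 * (spread_const C1 C2 K \<Lambda> \<phi> / D)"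
    using potential_oscillation[OF harm] V01 i by blast
  then have "\<bar>V i - (\<Sum>j\<in>G. V j * total_cond n E c j) / (\<Sum>j\<in>G. total_cond n E c j)\<bar>
               \<le> 2 * (spread_const C1 C2 K \<Lambda> \<phi> / D) + real K ^ 2 * C2 / (C1 * D)"
    using boundary_average_deviation[OF harm _ i] V01 by blast
  also have "\<dots> = deviation_const C1 C2 K \<Lambda> \<phi> / D"
    unfolding deviation_const_def using C1_pos D_pos by (simp add: field_simps)
  finally show ?thesis .
qed

end

lemma proper_expander_network:
  assumes const: "0 < C1" "C1 \<le> C2" "0 < C" "0 < \<delta>"
    and P: "proper C1 C2 K C \<delta> n E" and cond: "conductance E c"
    and bounds: "\<And>i j. E i j \<Longrightarrow> C1 \<le> c i j \<and> c i j \<le> C2"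
    and G: "G \<subseteq> {..<n}" "G \<noteq> {}" "card G \<le> K"
    and large: "2 * real K \<le> \<delta> * C * ln (real n)" "8 * C2 \<le> C1 * (\<delta> * C * ln (real n))"
  shows "expander_network n E c G C1 C2 K (\<delta> * C * ln (real n)) (4 / \<delta>) (C1 / (6 * C2))"
proof -
  have degrees: "\<And>i. i < n \<Longrightarrow> \<delta> * C * ln (real n) < real (degree E i) \<and>
                    real (degree E i) < 4 / \<delta> * (\<delta> * C * ln (real n))"
  proof -
    have "4 / \<delta> * (\<delta> * C * ln (real n)) = 4 * C * ln (real n)" using const(4) by simp
    then show "\<And>i. i < n \<Longrightarrow> ?thesis i" using P unfolding proper_def by simp
  qed
  interpret network n E c G C1 C2 K "\<delta> * C * ln (real n)" "4 / \<delta>"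
    using P cond bounds const G degrees large by unfold_locales (auto simp: proper_def)
  show ?thesis
  proof unfold_locales
    show "0 < C1 / (6 * C2)" using C1_pos C2_pos by simp
    fix S assume S: "S \<subseteq> interior" "S \<noteq> {}" "2 * real (card S) \<le> real n"
    show "C1 / (6 * C2) * ew S interior \<le> ew S (interior - S)"
    proof (rule expansion_from_ratio[OF S(1,2)])
      show "C1 / (6 * C2) \<le> (\<Sum>(i,j)\<in>{(i,j). i \<in> S \<and> j \<in> {..<n} - (G \<union> S) \<and> E i j}. c i j) /
                    (\<Sum>i\<in>S. \<Sum>j\<in>{j. j \<in> {..<n} - G \<and> E i j}. c i j)"
        using P cond bounds G S unfolding proper_def interior_def by auto
    qed
  qed
qed

lemma ln_eventually_ge: "\<exists>n0. \<forall>n\<ge>n0. L \<le> ln (real n)"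
proof (intro exI allI impI)
  fix n :: nat assume n: "nat \<lceil>exp L\<rceil> \<le> n"
  have "exp L \<le> real n" using n by linarith
  then show "L \<le> ln (real n)" by (metis exp_gt_zero less_le_trans ln_exp ln_le_cancel_iff)
qed

lemma proper_potential_deviation:
  fixes C1 C2 C \<delta> :: real and K :: nat
  assumes const: "0 < C1" "C1 \<le> C2" "1 \<le> K" "0 < C" "0 < \<delta>"
    and large: "2 * real K \<le> \<delta> * C * ln (real n)" "8 * C2 \<le> C1 * (\<delta> * C * ln (real n))"
    and P: "proper C1 C2 K C \<delta> n E" and cond: "conductance E c"
    and bounds: "\<forall>i j. E i j \<longrightarrow> C1 \<le> c i j \<and> c i j \<le> C2"
    and x: "\<forall>k<K. x k < n" "inj_on x {..<K}" and p: "\<forall>k<K. 0 \<le> p k \<and> p k \<le> 1"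
    and V: "\<forall>k<K. V (x k) = p k" "harmonic_off n E c (x ` {..<K}) V"
    and i: "i < n" "i \<notin> x ` {..<K}"
  shows "\<bar>V i - (\<Sum>k<K. p k * total_cond n E c (x k)) / (\<Sum>k<K. total_cond n E c (x k))\<bar>
           \<le> deviation_const C1 C2 K (4 / \<delta>) (C1 / (6 * C2)) / (\<delta> * C * ln (real n))"
proof -
  define G where "G = x ` {..<K}"
  have "x 0 \<in> G" unfolding G_def using const(3) by simp
  then have G: "G \<subseteq> {..<n}" "G \<noteq> {}" "card G \<le> K"
    unfolding G_def using x by (auto simp: card_image)
  interpret expander_network n E c G C1 C2 K "\<delta> * C * ln (real n)" "4 / \<delta>" "C1 / (6 * C2)"
    using proper_expander_network[OF const(1,2,4,5) P cond _ G large] bounds by blast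
  have "(\<Sum>k<K. p k * total_cond n E c (x k)) = (\<Sum>j\<in>G. V j * total_cond n E c j)"
    "(\<Sum>k<K. total_cond n E c (x k)) = (\<Sum>j\<in>G. total_cond n E c j)"
    unfolding G_def using x(2) V(1) by (simp_all add: sum.reindex)
  moreover have "i \<in> interior" using i unfolding G_def[symmetric] interior_def by simp
  moreover have "connected_graph n E" using P unfolding proper_def by blast
  ultimately show ?thesis
    using potential_deviation[of V i] V p unfolding G_def by force
qed

theorem theorem3p1:
  fixes C1 C2 C \<delta> :: real and K :: nat
  assumes "0 < C1" "C1 \<le> C2" "K \<ge> 1" "C > 0" "\<delta> > 0"
  shows "\<exists>M n0. \<forall>n\<ge>n0. \<forall>E c (x :: nat \<Rightarrow> nat) (p :: nat \<Rightarrow> real) V.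
     proper C1 C2 K C \<delta> n E \<and> conductance E c \<and> (\<forall>i j. E i j \<longrightarrow> C1 \<le> c i j \<and> c i j \<le> C2) \<and>
     (\<forall>k<K. x k < n) \<and> inj_on x {..<K} \<and> (\<forall>k<K. 0 \<le> p k \<and> p k \<le> 1) \<and>
     (\<forall>k<K. V (x k) = p k) \<and> harmonic_off n E c (x ` {..<K}) V \<longrightarrow>
     (\<forall>i<n. i \<notin> x ` {..<K} \<longrightarrow>
        \<bar>V i - (\<Sum>k<K. p k * total_cond n E c (x k)) / (\<Sum>k<K. total_cond n E c (x k))\<bar>
          \<le> M / ln (real n))"
proof -
  define M where "M = deviation_const C1 C2 K (4 / \<delta>) (C1 / (6 * C2)) / (\<delta> * C)"
  obtain n0 where n0: "\<forall>n\<ge>n0. max (2 * real K / (\<delta> * C)) (8 * C2 / (C1 * (\<delta> * C))) \<le> ln (real n)"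
    using ln_eventually_ge by blast
  have large: "2 * real K \<le> \<delta> * C * ln (real n)" "8 * C2 \<le> C1 * (\<delta> * C * ln (real n))"
    if "n0 \<le> n" for n
    using n0 that assms by (auto simp: field_simps)
  have M: "M / ln (real n) = deviation_const C1 C2 K (4 / \<delta>) (C1 / (6 * C2)) / (\<delta> * C * ln (real n))"
    for n :: nat unfolding M_def by simp
  show ?thesis
    by (intro exI[of _ M] exI[of _ n0]) (use proper_potential_deviation[OF assms large] M in auto)
qed

end
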